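(* For every integer $n\ge 3$, let $\delta_1,\dots,\delta_n$ be the eigenvalues of $\mathcal L_S$ (all positive). Then $$\sum_{i=1}^{n}\frac{1}{\delta_{i}}=\frac{\sqrt{3}\,n}{2}\cdot\frac{p^{n}-q^{n}}{p^{n}+q^{n}+2}.$$
   Context: $p=2+\sqrt3$, $q=2-\sqrt3$. $\mathcal L_S$ denotes the $n\times n$ matrix with all diagonal entries equal to $\tfrac43$, entries $(i,i+1)$ and $(i+1,i)$ equal to $-\tfrac13$ for $1\le i\le n-1$, entries $(1,n)$ and $(n,1)$ equal to $+\tfrac13$, and all other entries $0$. *)

theory Defs
  imports "Jordan_Normal_Form.Char_Poly"
begin

definition pp :: real where "pp = 2 + sqrt 3"
definition qq :: real where "qq = 2 - sqrt 3"

definition LS :: "nat \<Rightarrow> real mat" where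
  "LS n = mat n n (\<lambda>(i,j).
      if i = j then 4/3
      else if j = i + 1 \<or> i = j + 1 then -1/3
      else if (i = 0 \<and> j = n - 1) \<or> (i = n - 1 \<and> j = 0) then 1/3
      else 0)"

end

theory Submission
  imports Defs "Jordan_Normal_Form.Schur_Decomposition"
begin

text \<open>\<open>LS n\<close> has an explicit inverse \<open>3 u(|i - j|)\<close>, where \<open>u\<close> solves the three-term
  recurrence \<open>u (k - 1) + u (k + 1) = 4 u k\<close> of the tridiagonal part, is anti-periodic
  (\<open>u (n - k) = - u k\<close>) because of the sign-flipped corner entries, and is normalised by the
  diagonal.  The sum of the reciprocal eigenvalues is the trace of the inverse, \<open>3 n u 0\<close>; to
  see this over the reals, triangularise \<open>LS n\<close> (Schur) and note that the inverse of a
  triangular matrix has the reciprocal diagonal.\<close>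

lemma trace_mult_comm:
  fixes A B :: "'a :: comm_semiring_0 mat"
  assumes A: "A \<in> carrier_mat n m" and B: "B \<in> carrier_mat m n"
  shows "(\<Sum>i<n. (A * B) $$ (i,i)) = (\<Sum>j<m. (B * A) $$ (j,j))"
proof -
  have "(\<Sum>i<n. (A * B) $$ (i,i)) = (\<Sum>i<n. \<Sum>k<m. A $$ (i,k) * B $$ (k,i))"
    using A B by (intro sum.cong) (auto simp: scalar_prod_def atLeast0LessThan)
  also have "\<dots> = (\<Sum>k<m. \<Sum>i<n. B $$ (k,i) * A $$ (i,k))"
    by (subst sum.swap) (simp add: mult.commute)
  also have "\<dots> = (\<Sum>j<m. (B * A) $$ (j,j))"
    using A B by (intro sum.cong) (auto simp: scalar_prod_def atLeast0LessThan)
  finally show ?thesis .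
qed

lemma upper_triangular_mult_diag:
  fixes A B :: "'a :: semiring_0 mat"
  assumes A: "A \<in> carrier_mat n n" and B: "B \<in> carrier_mat n n"
    and "upper_triangular A" "upper_triangular B" and i: "i < n"
  shows "(A * B) $$ (i,i) = A $$ (i,i) * B $$ (i,i)"
proof -
  have "A $$ (i,k) * B $$ (k,i) = 0" if "k < n" "k \<noteq> i" for k
    using that assms upper_triangularD[of A k i] upper_triangularD[of B i k]
    by (cases "k < i") auto
  then have "(\<Sum>k\<in>{0..<n}. A $$ (i,k) * B $$ (k,i)) = A $$ (i,i) * B $$ (i,i)"
    using i by (subst sum.remove[of _ i]) auto
  then show ?thesis
    using A B i by (simp add: scalar_prod_def)
qed

lemma upper_triangular_left_inverse:
  fixes T N :: "'a :: field mat"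
  assumes T: "T \<in> carrier_mat n n" and N: "N \<in> carrier_mat n n"
    and ut: "upper_triangular T" and NT: "N * T = 1\<^sub>m n"
  shows "upper_triangular N"
proof -
  have "det N * det T = 1"
    using det_mult[OF N T] NT by simp
  then have "prod_list (diag_mat T) \<noteq> 0"
    using det_upper_triangular[OF ut T] by (metis mult_zero_right zero_neq_one)
  then have diag_nonzero: "T $$ (j,j) \<noteq> 0" if "j < n" for j
    using that T by (auto simp: prod_list_diag_prod)
  have "N $$ (i,j) = 0" if "j < i" "i < n" for i j
    using that
  proof (induction j arbitrary: i rule: less_induct)
    case (less j)
    have off_diagonal: "N $$ (i,k) * T $$ (k,j) = 0" if "k \<in> {0..<n} - {j}" for k
      using that less ut T upper_triangularD[of T j k] by (cases "k < j") auto
    have "(\<Sum>k\<in>{0..<n}. N $$ (i,k) * T $$ (k,j))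
        = N $$ (i,j) * T $$ (j,j) + (\<Sum>k\<in>{0..<n} - {j}. N $$ (i,k) * T $$ (k,j))"
      using less.prems by (intro sum.remove) auto
    also have "(\<Sum>k\<in>{0..<n} - {j}. N $$ (i,k) * T $$ (k,j)) = 0"
      by (rule sum.neutral) (use off_diagonal in blast)
    finally have "(\<Sum>k\<in>{0..<n}. N $$ (i,k) * T $$ (k,j)) = N $$ (i,j) * T $$ (j,j)"
      by simp
    moreover have "(N * T) $$ (i,j) = 0"
      using NT less.prems by simp
    ultimately have "N $$ (i,j) * T $$ (j,j) = 0"
      using less.prems N T by (simp add: scalar_prod_def)
    then show ?case
      using diag_nonzero less.prems by simp
  qed
  then show ?thesis
    using N by auto
qed

lemma upper_triangular_inverse_diag:
  fixes T N :: "'a :: field mat"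
  assumes T: "T \<in> carrier_mat n n" and N: "N \<in> carrier_mat n n"
    and ut: "upper_triangular T" and NT: "N * T = 1\<^sub>m n" and i: "i < n"
  shows "N $$ (i,i) = 1 / T $$ (i,i)"
proof -
  have "N $$ (i,i) * T $$ (i,i) = 1"
    using upper_triangular_mult_diag[OF N T upper_triangular_left_inverse[OF T N ut NT] ut i]
      NT i by simp
  then show ?thesis
    by (metis mult_zero_right zero_neq_one nonzero_eq_divide_eq)
qed

lemma sum_inverse_eigenvalues_eq_trace_inverse:
  fixes A B :: "'a :: conjugatable_ordered_field mat"
  assumes A: "A \<in> carrier_mat n n" and B: "B \<in> carrier_mat n n" and AB: "A * B = 1\<^sub>m n"
    and char_poly: "char_poly A = (\<Prod>e\<leftarrow>es. [:- e, 1:])"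
  shows "(\<Sum>i<n. 1 / es ! i) = (\<Sum>i<n. B $$ (i,i))"
proof -
  obtain T P Q where "schur_decomposition A es = (T,P,Q)"
    by (cases "schur_decomposition A es") auto
  from schur_decomposition[OF A char_poly this]
  have sim: "similar_mat_wit A T P Q" and ut: "upper_triangular T" and diag: "diag_mat T = es"
    by auto
  note sim = similar_mat_witD2[OF A sim]
  have T: "T \<in> carrier_mat n n" and P: "P \<in> carrier_mat n n" and Q: "Q \<in> carrier_mat n n"
    using sim by auto
  have BA: "B * A = 1\<^sub>m n"
    by (rule mat_mult_left_right_inverse[OF A B AB])
  define N where "N = Q * B * P"
  have N: "N \<in> carrier_mat n n"
    unfolding N_def using Q B P by auto
  have "A * P = P * T * (Q * P)"
    using sim P T Q by (simp add: assoc_mult_mat[of _ n n _ n _ n])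
  then have PT: "P * T = A * P"
    using sim P T by simp
  have "N * T = Q * B * (P * T)"
    unfolding N_def using Q B P T by (simp add: assoc_mult_mat[of _ n n _ n _ n])
  also have "\<dots> = Q * (B * A) * P"
    using sim Q B P by (simp add: assoc_mult_mat[of _ n n _ n _ n])
  also have "\<dots> = 1\<^sub>m n"
    using sim BA P by simp
  finally have NT: "N * T = 1\<^sub>m n" .
  have "(\<Sum>i<n. 1 / es ! i) = (\<Sum>i<n. N $$ (i,i))"
    using upper_triangular_inverse_diag[OF T N ut NT] diag T by (auto simp: diag_mat_def)
  also have "\<dots> = (\<Sum>i<n. (B * P * Q) $$ (i,i))"
    unfolding N_def using trace_mult_comm[of Q n n "B * P"] Q B P
    by (simp add: assoc_mult_mat[of _ n n _ n _ n])
  also have "\<dots> = (\<Sum>i<n. B $$ (i,i))"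
    using sim B P Q by (simp add: assoc_mult_mat[of _ n n _ n _ n])
  finally show ?thesis .
qed

lemma pp_mult_qq: "pp * qq = 1"
  unfolding pp_def qq_def by (simp add: algebra_simps power2_eq_square[symmetric])

lemma pp_gt_0: "pp > 0"
  unfolding pp_def by (simp add: add_pos_nonneg)

lemma qq_gt_0: "qq > 0"
  unfolding qq_def by (smt (verit) real_sqrt_less_iff real_sqrt_four)

lemma pp_qq_recurrence:
  assumes "x = pp \<or> x = qq"
  shows "x ^ Suc (Suc k) = 4 * x ^ Suc k - x ^ k"
proof -
  have "pp\<^sup>2 = 4 * pp - 1" "qq\<^sup>2 = 4 * qq - 1"
    unfolding pp_def qq_def power2_eq_square by (simp_all add: algebra_simps)
  then have x2: "x\<^sup>2 = 4 * x - 1"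
    using assms by auto
  have "x ^ Suc (Suc k) = x ^ k * x\<^sup>2"
    by (simp add: power2_eq_square)
  also have "\<dots> = 4 * x ^ Suc k - x ^ k"
    unfolding x2 by (simp add: algebra_simps)
  finally show ?thesis .
qed

text \<open>The combination of \<open>pp ^ k\<close> and \<open>qq ^ k\<close> fixed by \<open>u (n - k) = - u k\<close> and by
  \<open>4 u 0 - 2 u 1 = 1\<close>, the equations of the corner and diagonal entries.\<close>

definition LS_inv_coeff :: "nat \<Rightarrow> nat \<Rightarrow> real" where
  "LS_inv_coeff n k = (qq ^ k - qq ^ n * pp ^ k) / (2 * sqrt 3 * (1 + qq ^ n))"

definition nat_dist :: "nat \<Rightarrow> nat \<Rightarrow> nat" where
  "nat_dist i j = (if i \<le> j then j - i else i - j)"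

definition LS_inv :: "nat \<Rightarrow> real mat" where
  "LS_inv n = mat n n (\<lambda>(i,j). 3 * LS_inv_coeff n (nat_dist i j))"

lemma LS_inv_coeff_recurrence:
  assumes "0 < k"
  shows "LS_inv_coeff n (k - 1) + LS_inv_coeff n (k + 1) = 4 * LS_inv_coeff n k"
proof -
  obtain m where k: "k = Suc m"
    using assms by (cases k) auto
  have "qq ^ m + qq ^ Suc (Suc m) = 4 * qq ^ Suc m"
    "pp ^ m + pp ^ Suc (Suc m) = 4 * pp ^ Suc m"
    using pp_qq_recurrence[of qq m] pp_qq_recurrence[of pp m] by simp_all
  then have "(qq ^ m - qq ^ n * pp ^ m) + (qq ^ Suc (Suc m) - qq ^ n * pp ^ Suc (Suc m))
      = 4 * (qq ^ Suc m - qq ^ n * pp ^ Suc m)"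
    by (metis (no_types, lifting) add_diff_add right_diff_distrib' distrib_left mult.left_commute)
  then show ?thesis
    unfolding k LS_inv_coeff_def by (simp add: add_divide_distrib[symmetric])
qed

lemma LS_inv_coeff_antisym:
  assumes "k \<le> n"
  shows "LS_inv_coeff n (n - k) = - LS_inv_coeff n k"
proof -
  have "qq ^ n * pp ^ k = qq ^ (n - k) * (qq * pp) ^ k"
    using assms by (simp add: power_mult_distrib power_add[symmetric])
  moreover have "qq ^ n * pp ^ (n - k) = qq ^ k * (qq * pp) ^ (n - k)"
    using assms by (simp add: power_mult_distrib power_add[symmetric] algebra_simps)
  ultimately show ?thesis
    unfolding LS_inv_coeff_def using pp_mult_qq by (simp add: algebra_simps minus_divide_left)
qed

lemma LS_inv_coeff_boundary: "4 * LS_inv_coeff n 0 - 2 * LS_inv_coeff n 1 = 1"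
proof -
  define D where "D = 2 * sqrt 3 * (1 + qq ^ n)"
  have "D > 0"
    unfolding D_def using qq_gt_0 by (simp add: add_pos_pos)
  have "4 * (1 - qq ^ n) - 2 * (qq - qq ^ n * pp) = (4 - 2 * qq) - qq ^ n * (4 - 2 * pp)"
    by (simp add: algebra_simps)
  also have "\<dots> = D"
    unfolding D_def pp_def qq_def by (simp add: algebra_simps)
  finally have "4 * ((1 - qq ^ n) / D) - 2 * ((qq - qq ^ n * pp) / D) = 1"
    using \<open>D > 0\<close> by (simp add: diff_divide_distrib[symmetric])
  then show ?thesis
    unfolding LS_inv_coeff_def D_def by simp
qed

lemma LS_inv_coeff_0_closed_form:
  "3 * real n * LS_inv_coeff n 0 =
     sqrt 3 * real n / 2 * ((pp ^ n - qq ^ n) / (pp ^ n + qq ^ n + 2))"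
proof -
  define x y where "x = pp ^ n" and "y = qq ^ n"
  have "x * y = 1" "x > 0" "y > 0"
    unfolding x_def y_def using pp_mult_qq pp_gt_0 qq_gt_0
    by (simp_all add: power_mult_distrib[symmetric])
  then have "x - y = (1 - y) * (x + 1)" "x + y + 2 = (1 + y) * (x + 1)" "x + 1 \<noteq> 0"
    by (simp_all add: algebra_simps)
  then have "(x - y) / (x + y + 2) = (1 - y) / (1 + y)"
    by simp
  moreover have "3 * real n * LS_inv_coeff n 0 = 3 / sqrt 3 * real n / 2 * ((1 - y) / (1 + y))"
    unfolding LS_inv_coeff_def y_def by simp
  ultimately show ?thesis
    unfolding x_def y_def by (simp add: real_div_sqrt)
qed

definition cyc_pred :: "nat \<Rightarrow> nat \<Rightarrow> nat" where
  "cyc_pred n i = (if i = 0 then n - 1 else i - 1)"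

definition cyc_succ :: "nat \<Rightarrow> nat \<Rightarrow> nat" where
  "cyc_succ n i = (if i = n - 1 then 0 else i + 1)"

lemma LS_row_mult:
  assumes n: "n \<ge> 3" and i: "i < n"
  shows "(\<Sum>k\<in>{0..<n}. LS n $$ (i,k) * g k) =
     (4 * g i + (if i = 0 then 1 else -1) * g (cyc_pred n i)
       + (if i = n - 1 then 1 else -1) * g (cyc_succ n i)) / 3"
proof -
  define pr nx where "pr = cyc_pred n i" and "nx = cyc_succ n i"
  have distinct: "pr \<noteq> i" "nx \<noteq> i" "pr \<noteq> nx" and range: "pr < n" "nx < n"
    using n i unfolding pr_def nx_def cyc_pred_def cyc_succ_def by auto
  have "LS n $$ (i,k) * g k = 0" if "k \<in> {0..<n} - {i,pr,nx}" for k
    using that n i unfolding LS_def pr_def nx_def cyc_pred_def cyc_succ_def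
    by (auto split: if_splits)
  then have "(\<Sum>k\<in>{0..<n}. LS n $$ (i,k) * g k) = (\<Sum>k\<in>{i,pr,nx}. LS n $$ (i,k) * g k)"
    using range i by (intro sum.mono_neutral_right) auto
  also have "\<dots> = LS n $$ (i,i) * g i + LS n $$ (i,pr) * g pr + LS n $$ (i,nx) * g nx"
    using distinct by simp
  also have "LS n $$ (i,i) = 4/3"
    using i unfolding LS_def by simp
  also have "LS n $$ (i,pr) = (if i = 0 then 1/3 else -1/3)"
    using i range n unfolding LS_def pr_def cyc_pred_def by auto
  also have "LS n $$ (i,nx) = (if i = n - 1 then 1/3 else -1/3)"
    using i range n unfolding LS_def nx_def cyc_succ_def by auto
  finally show ?thesis
    unfolding pr_def nx_def by (simp add: add_divide_distrib)
qed

lemma LS_inv_coeff_column: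
  assumes n: "n \<ge> 3" and i: "i < n" and j: "j < n"
  shows "4 * LS_inv_coeff n (nat_dist i j)
      + (if i = 0 then 1 else -1) * LS_inv_coeff n (nat_dist (cyc_pred n i) j)
      + (if i = n - 1 then 1 else -1) * LS_inv_coeff n (nat_dist (cyc_succ n i) j)
    = (if i = j then 1 else 0)"
proof -
  let ?c = "LS_inv_coeff n"
  note rec = LS_inv_coeff_recurrence[of _ n] and antisym = LS_inv_coeff_antisym[of _ n]
  consider "i = j" | "i < j" | "j < i"
    by linarith
  then show ?thesis
  proof cases
    case 1
    then show ?thesis
      using LS_inv_coeff_boundary[of n] antisym[of 1] n
      unfolding nat_dist_def cyc_pred_def cyc_succ_def by auto
  next
    case 2
    show ?thesis
    proof (cases "i = 0")
      case True
      have "?c (n - 1 - j) = - ?c (j + 1)"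
        using antisym[of "j + 1"] j by (simp add: diff_diff_add)
      moreover have "?c (j - 1) + ?c (j + 1) = 4 * ?c j"
        using rec 2 True by simp
      ultimately show ?thesis
        using True 2 n j unfolding nat_dist_def cyc_pred_def cyc_succ_def by auto
    next
      case False
      have "?c (j - i - 1) + ?c (j - i + 1) = 4 * ?c (j - i)"
        using rec[of "j - i"] 2 by simp
      moreover have "j - (i - 1) = j - i + 1" "j - (i + 1) = j - i - 1"
        using 2 False by auto
      ultimately show ?thesis
        using False 2 n j unfolding nat_dist_def cyc_pred_def cyc_succ_def by auto
    qed
  next
    case 3
    have rec_ij: "?c (i - j - 1) + ?c (i - j + 1) = 4 * ?c (i - j)"
      using rec[of "i - j"] 3 by simp
    show ?thesis
    proof (cases "i = n - 1")
      case True
      have "?c j = - ?c (n - j)"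
        using antisym[of j] j by simp
      moreover have "n - j = i - j + 1" "i - 1 - j = i - j - 1"
        using j True 3 by auto
      ultimately show ?thesis
        using True 3 n j rec_ij unfolding nat_dist_def cyc_pred_def cyc_succ_def by auto
    next
      case False
      have "i + 1 - j = i - j + 1" "i - 1 - j = i - j - 1"
        using 3 by auto
      then show ?thesis
        using False 3 n i j rec_ij unfolding nat_dist_def cyc_pred_def cyc_succ_def by auto
    qed
  qed
qed

lemma LS_mult_LS_inv:
  assumes n: "n \<ge> 3"
  shows "LS n * LS_inv n = 1\<^sub>m n"
proof (rule eq_matI)
  fix i j
  assume "i < dim_row (1\<^sub>m n :: real mat)" and "j < dim_col (1\<^sub>m n :: real mat)"
  then have i: "i < n" and j: "j < n"
    by auto
  have "(LS n * LS_inv n) $$ (i,j) = (\<Sum>k\<in>{0..<n}. LS n $$ (i,k) * (3 * LS_inv_coeff n (nat_dist k j)))"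
    using i j by (simp add: LS_def LS_inv_def scalar_prod_def)
  also have "\<dots> = (1\<^sub>m n :: real mat) $$ (i,j)"
    unfolding LS_row_mult[OF n i] using LS_inv_coeff_column[OF n i j] i j by simp
  finally show "(LS n * LS_inv n) $$ (i,j) = (1\<^sub>m n :: real mat) $$ (i,j)" .
qed (auto simp: LS_def LS_inv_def)

theorem lemma4p2:
  fixes n :: nat and \<delta> :: "real list"
  assumes "n \<ge> 3"
    and "length \<delta> = n"
    and "char_poly (LS n) = (\<Prod>d\<leftarrow>\<delta>. [:- d, 1:])"
  shows "(\<Sum>i<n. 1 / \<delta> ! i) =
           sqrt 3 * real n / 2 * ((pp ^ n - qq ^ n) / (pp ^ n + qq ^ n + 2))"
proof -
  have "(\<Sum>i<n. 1 / \<delta> ! i) = (\<Sum>i<n. LS_inv n $$ (i,i))"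
    by (rule sum_inverse_eigenvalues_eq_trace_inverse[OF _ _ LS_mult_LS_inv[OF assms(1)] assms(3)])
      (simp_all add: LS_def LS_inv_def)
  also have "\<dots> = 3 * real n * LS_inv_coeff n 0"
    by (simp add: LS_inv_def nat_dist_def)
  finally show ?thesis
    using LS_inv_coeff_0_closed_form by simp
qed

end
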